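(* Let $n\ge3$, $m_1,\dots,m_n>0$, and let $\varphi_1,\dots,\varphi_n$ be the longitudes of a fixed-point configuration of the masses on the equator. Let $H,G$ be the $n\times n$ matrices with entries (for $i\ne j$) $H_{ij}=\frac{m_im_j}{\sin^3d_{ij}}$, $H_{ii}=-\sum_{j\neq i}H_{ij}\cos d_{ij}$, $G_{ij}=\frac{-2m_im_j\cos d_{ij}}{\sin^3 d_{ij}}$, $G_{ii}=-\sum_{j\neq i}G_{ij}$, and let $v_1,v_2,v_3\in\mathbb R^n$ have entries $(v_1)_i=\cos d_{1i}=\cos(\varphi_i-\varphi_1)$, $(v_2)_i=\sin(\varphi_i-\varphi_1)$, $(v_3)_i=1$ (with $d_{11}=0$). Then $Hv_1=0$, $Hv_2=0$ and $Gv_3=0$.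
   Context: Masses lie on the equator of the unit sphere at longitudes $\varphi_i$, with geodesic distances $d_{ij}\in(0,\pi)$ for $i\ne j$ (on the equator $\cos d_{ij}=\cos(\varphi_i-\varphi_j)$). The force function is $V=\sum_{i<j}m_im_j\cot d_{ij}$, and a fixed point is a critical point of $V$ on the configuration space $\{d_{ij}\notin\{0,\pi\}\}\subset(\mathbb S^2)^n$. (The matrices $H$ and $G$ are the Hessians of $V$ with respect to the colatitudes $\theta_i$ and to the longitudes $\varphi_i$ at the configuration.) *)

theory Defs
  imports "HOL-Analysis.Analysis"
begin

text \<open>Cosine of the geodesic distance between points with colatitudes th and
 longitudes ph (spherical coordinates on the unit sphere).\<close>
definition cosdist :: "real^'n \<Rightarrow> real^'n \<Rightarrow> 'n \<Rightarrow> 'n \<Rightarrow> real" where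
  "cosdist th ph i j = cos (th$i) * cos (th$j) + sin (th$i) * sin (th$j) * cos (ph$i - ph$j)"

definition geodist :: "real^'n \<Rightarrow> real^'n \<Rightarrow> 'n \<Rightarrow> 'n \<Rightarrow> real" where
  "geodist th ph i j = arccos (cosdist th ph i j)"

text \<open>Force function V = sum over i<j of m_i m_j cot d_ij, written as half the
 sum over ordered pairs i \<noteq> j.\<close>
definition forceV :: "real^'n \<Rightarrow> real^'n \<Rightarrow> real^'n \<Rightarrow> real" where
  "forceV m th ph = (\<Sum>i\<in>UNIV. \<Sum>j\<in>UNIV - {i}. m$i * m$j * cot (geodist th ph i j)) / 2"

definition equator :: "real^'n" where
  "equator = (\<chi> i. pi / 2)"

definition equator_fixed_point :: "real^'n \<Rightarrow> real^'n \<Rightarrow> bool" where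
  "equator_fixed_point m ph \<longleftrightarrow>
     (\<forall>i j. i \<noteq> j \<longrightarrow> geodist equator ph i j \<in> {0<..<pi}) \<and>
     ((\<lambda>p. forceV m (fst p) (snd p)) has_derivative (\<lambda>_. 0)) (at (equator, ph))"

definition matH :: "real^'n \<Rightarrow> real^'n \<Rightarrow> real^'n^'n" where
  "matH m ph = (\<chi> i j. let d = geodist equator ph in
      if i = j then - (\<Sum>k\<in>UNIV - {i}. m$i * m$k / (sin (d i k))^3 * cos (d i k))
      else m$i * m$j / (sin (d i j))^3)"

definition matG :: "real^'n \<Rightarrow> real^'n \<Rightarrow> real^'n^'n" where
  "matG m ph = (\<chi> i j. let d = geodist equator ph in
      if i = j then - (\<Sum>k\<in>UNIV - {i}. -2 * m$i * m$k * cos (d i k) / (sin (d i k))^3)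
      else -2 * m$i * m$j * cos (d i j) / (sin (d i j))^3)"

end

theory Submission
  imports Defs
begin

text \<open>On the equator the pair term of V is m_i m_j cot (arccos (cos (phi_i - phi_j))), whose
  derivative in phi_i is - w_ij sin (phi_i - phi_j) with w_ij = m_i m_j / |sin (phi_i - phi_j)|^3,
  the off-diagonal entry of H. So a fixed point satisfies the force balance
  sum_j w_ij sin (phi_i - phi_j) = 0 for every i. Row i of H v is
  sum_j w_ij (v_j - cos (phi_i - phi_j) v_i), and for v = cos (phi - c) or v = sin (phi - c) the
  addition formulas turn each summand into w_ij sin (phi_i - phi_j) times a factor independent of j,
  so the row vanishes by the force balance. Finally G v_3 = 0 because G has zero row sums by
  construction.\<close>

lemma sin_arccos_cos: "sin (arccos (cos x)) = \<bar>sin x\<bar>"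
  by (simp add: sin_arccos cos_squared_eq)

lemma has_real_derivative_cot_arccos_cos:
  assumes "sin x \<noteq> 0"
  shows "((\<lambda>x. cot (arccos (cos x))) has_real_derivative - sin x / \<bar>sin x\<bar> ^ 3) (at x)"
proof -
  have "(cos x)\<^sup>2 < 1"
    using assms by (simp add: cos_squared_eq)
  then have "-1 < cos x" "cos x < 1"
    by (simp_all add: abs_square_less_1 abs_less_iff)
  then have "((\<lambda>x. cot (arccos (cos x))) has_real_derivative
      - inverse ((sin (arccos (cos x)))\<^sup>2) * (inverse (- sqrt (1 - (cos x)\<^sup>2)) * - sin x)) (at x)"
    using assms
    by (intro DERIV_chain2[OF DERIV_cot] DERIV_chain2[OF DERIV_arccos] DERIV_cos)
       (auto simp: sin_arccos_cos)
  then show ?thesis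
    using assms
    by (simp add: sin_arccos_cos[symmetric] sin_arccos field_simps power2_eq_square power3_eq_cube)
qed

lemma has_real_derivative_cot_arccos_cos_along:
  assumes "sin x \<noteq> 0"
  shows "((\<lambda>t. cot (arccos (cos (x + t * s)))) has_real_derivative - sin x / \<bar>sin x\<bar> ^ 3 * s) (at 0)"
proof -
  have "((\<lambda>x. cot (arccos (cos x))) has_real_derivative - sin x / \<bar>sin x\<bar> ^ 3) (at ((\<lambda>t. x + t * s) 0))"
    using has_real_derivative_cot_arccos_cos[OF assms] by simp
  moreover have "((\<lambda>t. x + t * s) has_real_derivative s) (at 0)"
    by (auto intro!: derivative_eq_intros)
  ultimately show ?thesis
    by (rule DERIV_chain2)
qed

lemma sum_offdiag_antisym_delta:
  fixes c :: "'a::finite \<Rightarrow> 'a \<Rightarrow> 'b::comm_ring_1"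
  assumes "\<And>a b. c b a = - c a b"
  shows "(\<Sum>a\<in>UNIV. \<Sum>b\<in>UNIV-{a}. c a b * ((if a = i then 1 else 0) - (if b = i then 1 else 0)))
     = 2 * (\<Sum>b\<in>UNIV-{i}. c i b)"
proof -
  have "(\<Sum>b\<in>UNIV-{a}. c a b * (if a = i then 1 else 0)) = (if a = i then \<Sum>b\<in>UNIV-{i}. c i b else 0)"
    for a by simp
  then have out: "(\<Sum>a\<in>UNIV. \<Sum>b\<in>UNIV-{a}. c a b * (if a = i then 1 else 0)) = (\<Sum>b\<in>UNIV-{i}. c i b)"
    by simp
  have "(\<Sum>a\<in>UNIV. \<Sum>b\<in>UNIV-{a}. c a b * (if b = i then 1 else 0)) = (\<Sum>a\<in>UNIV-{i}. c a i)"
    by (simp add: if_distrib sum.If_cases Diff_eq Compl_eq cong: if_cong) (metis (mono_tags))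
  also have "\<dots> = (\<Sum>b\<in>UNIV-{i}. - c i b)"
    by (intro sum.cong refl assms)
  finally have into: "(\<Sum>a\<in>UNIV. \<Sum>b\<in>UNIV-{a}. c a b * (if b = i then 1 else 0)) = - (\<Sum>b\<in>UNIV-{i}. c i b)"
    by (simp add: sum_negf)
  show ?thesis
    by (simp only: right_diff_distrib sum_subtractf out into) simp
qed

lemma geodist_equator: "geodist equator ph i j = arccos (cos (ph$i - ph$j))"
  by (simp add: geodist_def cosdist_def equator_def)

lemma forceV_equator:
  "forceV m equator ph = (\<Sum>a\<in>UNIV. \<Sum>b\<in>UNIV-{a}. m$a * m$b * cot (arccos (cos (ph$a - ph$b)))) / 2"
  by (simp add: forceV_def geodist_equator)

lemma sin_geodist_equator: "sin (geodist equator ph i j) = \<bar>sin (ph$i - ph$j)\<bar>"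
  by (simp add: geodist_equator sin_arccos_cos)

lemma cos_geodist_equator: "cos (geodist equator ph i j) = cos (ph$i - ph$j)"
  by (simp add: geodist_equator)

lemma sin_nonzero_if_geodist_equator_between:
  assumes "geodist equator ph i j \<in> {0<..<pi}"
  shows "sin (ph$i - ph$j) \<noteq> 0"
  using sin_gt_zero[of "geodist equator ph i j"] assms by (auto simp: sin_geodist_equator)

text \<open>Since sin d_ij = |sin (phi_i - phi_j)| on the equator, these are the off-diagonal entries of H.\<close>

definition equator_weight :: "real^'n \<Rightarrow> real^'n \<Rightarrow> 'n \<Rightarrow> 'n \<Rightarrow> real" where
  "equator_weight m ph i j = m$i * m$j / \<bar>sin (ph$i - ph$j)\<bar> ^ 3"

lemma has_real_derivative_forceV_equator_axis:
  fixes m ph :: "real^'n" and i :: 'n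
  assumes "\<And>a b. a \<noteq> b \<Longrightarrow> sin (ph$a - ph$b) \<noteq> 0"
  shows "((\<lambda>t. forceV m equator (ph + t *\<^sub>R axis i 1)) has_real_derivative
           - (\<Sum>j\<in>UNIV-{i}. equator_weight m ph i j * sin (ph$i - ph$j))) (at 0)"
proof -
  define e where "e a = (if a = i then 1 else 0 :: real)" for a
  define c where "c a b = - m$a * m$b * sin (ph$a - ph$b) / \<bar>sin (ph$a - ph$b)\<bar> ^ 3" for a b
  have shift: "(ph + t *\<^sub>R axis i 1)$a - (ph + t *\<^sub>R axis i 1)$b = ph$a - ph$b + t * (e a - e b)"
    for t a b by (simp add: e_def axis_def algebra_simps)
  have "((\<lambda>t. m$a * m$b * cot (arccos (cos (ph$a - ph$b + t * (e a - e b)))))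
          has_real_derivative c a b * (e a - e b)) (at 0)" if "b \<in> UNIV - {a}" for a b
    using DERIV_cmult[OF has_real_derivative_cot_arccos_cos_along[where x = "ph$a - ph$b" and s = "e a - e b"],
        of "m$a * m$b"] that assms
    by (simp add: c_def mult.assoc)
  then have "((\<lambda>t. forceV m equator (ph + t *\<^sub>R axis i 1)) has_real_derivative
      (\<Sum>a\<in>UNIV. \<Sum>b\<in>UNIV-{a}. c a b * (e a - e b)) / 2) (at 0)"
    unfolding forceV_equator shift by (intro DERIV_cdivide DERIV_sum) auto
  moreover have "(\<Sum>a\<in>UNIV. \<Sum>b\<in>UNIV-{a}. c a b * (e a - e b)) = 2 * (\<Sum>b\<in>UNIV-{i}. c i b)"
  proof (unfold e_def, rule sum_offdiag_antisym_delta)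
    fix a b
    have "sin (ph$b - ph$a) = - sin (ph$a - ph$b)"
      using sin_minus[of "ph$a - ph$b"] by simp
    then show "c b a = - c a b"
      by (simp add: c_def mult.commute)
  qed
  ultimately show ?thesis
    by (simp add: c_def equator_weight_def sum_negf)
qed

lemma equator_fixed_point_force_balance:
  fixes m ph :: "real^'n" and i :: 'n
  assumes "equator_fixed_point m ph"
  shows "(\<Sum>j\<in>UNIV-{i}. equator_weight m ph i j * sin (ph$i - ph$j)) = 0"
proof -
  from assms have crit: "((\<lambda>p. forceV m (fst p) (snd p)) has_derivative (\<lambda>_. 0)) (at (equator, ph))"
    and between: "\<And>a b. a \<noteq> b \<Longrightarrow> geodist equator ph a b \<in> {0<..<pi}"
    unfolding equator_fixed_point_def by auto
  define g where "g t = (equator :: real^'n, ph + t *\<^sub>R axis i 1)" for t :: real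
  have "(g has_derivative (\<lambda>t. (0, t *\<^sub>R axis i 1))) (at 0)"
    unfolding g_def by (auto intro!: derivative_eq_intros)
  moreover have "(equator, ph) = g 0"
    by (simp add: g_def)
  ultimately have "((\<lambda>t. forceV m (fst (g t)) (snd (g t))) has_derivative (\<lambda>_. 0)) (at 0)"
    using has_derivative_compose crit by fastforce
  then have "((\<lambda>t. forceV m equator (ph + t *\<^sub>R axis i 1)) has_derivative (\<lambda>_. 0)) (at 0)"
    by (simp add: g_def)
  then have "((\<lambda>t. forceV m equator (ph + t *\<^sub>R axis i 1)) has_real_derivative 0) (at 0)"
    by (rule has_derivative_imp_has_field_derivative) simp
  moreover have "((\<lambda>t. forceV m equator (ph + t *\<^sub>R axis i 1)) has_real_derivative
           - (\<Sum>j\<in>UNIV-{i}. equator_weight m ph i j * sin (ph$i - ph$j))) (at 0)"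
    by (rule has_real_derivative_forceV_equator_axis)
       (use between sin_nonzero_if_geodist_equator_between in blast)
  ultimately show ?thesis
    using DERIV_unique by force
qed

lemma matH_mult_vec_nth:
  "(matH m ph *v v)$i = (\<Sum>j\<in>UNIV-{i}. equator_weight m ph i j * (v$j - cos (ph$i - ph$j) * v$i))"
proof -
  have "(matH m ph *v v)$i = matH m ph $ i $ i * v$i + (\<Sum>j\<in>UNIV-{i}. matH m ph $ i $ j * v$j)"
    by (simp add: matrix_vector_mult_def sum.remove[of UNIV i])
  also have "\<dots> = - (\<Sum>j\<in>UNIV-{i}. equator_weight m ph i j * cos (ph$i - ph$j)) * v$i
      + (\<Sum>j\<in>UNIV-{i}. equator_weight m ph i j * v$j)"
    by (simp add: matH_def Let_def sin_geodist_equator cos_geodist_equator equator_weight_def)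
  finally show ?thesis
    by (simp add: right_diff_distrib sum_subtractf sum_distrib_right mult.assoc)
qed

lemma matH_mult_vec_cos_shift:
  "(matH m ph *v (\<chi> j. cos (ph$j - c)))$i
     = (\<Sum>j\<in>UNIV-{i}. equator_weight m ph i j * sin (ph$i - ph$j)) * sin (ph$i - c)"
proof -
  have "cos (ph$j - c) - cos (ph$i - ph$j) * cos (ph$i - c) = sin (ph$i - ph$j) * sin (ph$i - c)" for j
    using cos_diff[of "ph$i - c" "ph$i - ph$j"] by simp
  then show ?thesis
    by (simp add: matH_mult_vec_nth sum_distrib_right mult.assoc)
qed

lemma matH_mult_vec_sin_shift:
  "(matH m ph *v (\<chi> j. sin (ph$j - c)))$i
     = - (\<Sum>j\<in>UNIV-{i}. equator_weight m ph i j * sin (ph$i - ph$j)) * cos (ph$i - c)"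
proof -
  have "sin (ph$j - c) - cos (ph$i - ph$j) * sin (ph$i - c) = - (sin (ph$i - ph$j) * cos (ph$i - c))" for j
    using sin_diff[of "ph$i - c" "ph$i - ph$j"] by simp
  then show ?thesis
    by (simp add: matH_mult_vec_nth sum_distrib_right sum_negf mult.assoc)
qed

lemma matG_mult_ones: "matG m ph *v (\<chi> i. 1) = 0"
proof -
  have "(matG m ph *v (\<chi> i. 1))$i = matG m ph $ i $ i + (\<Sum>j\<in>UNIV-{i}. matG m ph $ i $ j)" for i
    by (simp add: matrix_vector_mult_def sum.remove[of UNIV i])
  then show ?thesis
    by (simp add: vec_eq_iff matG_def Let_def)
qed

theorem lemma3:
  fixes m ph :: "real^'n" and k :: 'n
  assumes "CARD('n) \<ge> 3"
    and "\<forall>i. m$i > 0"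
    and "equator_fixed_point m ph"
  shows "matH m ph *v (\<chi> i. cos (ph$i - ph$k)) = 0 \<and>
         matH m ph *v (\<chi> i. sin (ph$i - ph$k)) = 0 \<and>
         matG m ph *v (\<chi> i. 1) = 0"
  using equator_fixed_point_force_balance[OF assms(3)]
  by (simp add: vec_eq_iff matH_mult_vec_cos_shift matH_mult_vec_sin_shift matG_mult_ones)

end
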